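(* Let $(r_n)_{n\in\mathbb N}\subset L^0_+$ with $r_n\neq0$ for all $n$, and suppose that the set $\{\sup_{n\in\mathbb N}r_n>0\}$ is atomless (contains no atom of $\mathbb P$). Then there exists $r\in L^0_{++}$ such that $\mathbb P(r_n\ge r)>0$ for all $n\in\mathbb N$.
   Context: $(\Omega,\mathcal F,\mathbb P)$ is a probability space, $L^0$ the real-valued measurable functions modulo a.e. equality with a.e. order, $L^0_+=\{r\ge0\}$, $L^0_{++}=\{r>0\text{ a.e.}\}$; $\sup$ denotes the essential supremum. $r_n\ne0$ means $\mathbb P(r_n\ne 0)>0$. *)

theory Defs
  imports "HOL-Probability.Probability"
begin

definition is_atom :: "'a measure \<Rightarrow> 'a set \<Rightarrow> bool" where
  "is_atom M A \<longleftrightarrow> A \<in> sets M \<and> measure M A > 0 \<and>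
     (\<forall>B\<in>sets M. B \<subseteq> A \<longrightarrow> measure M B = 0 \<or> measure M B = measure M A)"

definition atomless_set :: "'a measure \<Rightarrow> 'a set \<Rightarrow> bool" where
  "atomless_set M S \<longleftrightarrow> \<not> (\<exists>A. is_atom M A \<and> A \<subseteq> S)"

end

theory Submission
  imports Defs
begin

text \<open>Since r n is nonnegative and not a.e. zero, some level set C n = {r n \<ge> eps n} with
eps n > 0 has positive measure, and it lies in the atomless set {sup r > 0}. Repeated halving
inside an atomless set yields D n \<subseteq> C n with 0 < P(D n) \<le> 2^-n. By Borel-Cantelli almost every
point lies in only finitely many D n, so the infimum of eps n over the D n containing a point
(capped at 1) is a.e. positive; it is \<le> r n on D n, which has positive measure.\<close>

lemma (in finite_measure) atomless_set_half_subset: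
  assumes "atomless_set M S" "D \<in> sets M" "D \<subseteq> S" "measure M D > 0"
  shows "\<exists>B\<in>sets M. B \<subseteq> D \<and> 0 < measure M B \<and> measure M B \<le> measure M D / 2"
proof -
  have "\<not> is_atom M D" using assms unfolding atomless_set_def by blast
  then obtain B where B: "B \<in> sets M" "B \<subseteq> D" "measure M B \<noteq> 0" "measure M B \<noteq> measure M D"
    using assms unfolding is_atom_def by blast
  have "measure M B \<le> measure M D" using B assms by (intro finite_measure_mono) auto
  then have B_pos: "0 < measure M B" and B_less: "measure M B < measure M D"
    using B measure_nonneg[of M B] by linarith+
  have diff: "measure M (D - B) = measure M D - measure M B"
    using B assms by (intro finite_measure_Diff) auto
  show ?thesis
  proof (cases "measure M B \<le> measure M D / 2")
    case True
    with B B_pos show ?thesis by blast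
  next
    case False
    with B assms diff B_less show ?thesis by (intro bexI[of _ "D - B"]) auto
  qed
qed

lemma (in finite_measure) atomless_set_small_subset:
  assumes "atomless_set M S" "C \<in> sets M" "C \<subseteq> S" "measure M C > 0"
  shows "\<exists>D\<in>sets M. D \<subseteq> C \<and> 0 < measure M D \<and> measure M D \<le> measure M C / 2 ^ k"
proof (induction k)
  case 0
  then show ?case using assms by auto
next
  case (Suc k)
  then obtain D where D: "D \<in> sets M" "D \<subseteq> C" "0 < measure M D" "measure M D \<le> measure M C / 2 ^ k"
    by blast
  then obtain B where B: "B \<in> sets M" "B \<subseteq> D" "0 < measure M B" "measure M B \<le> measure M D / 2"
    using atomless_set_half_subset[OF assms(1)] assms(3) by (metis order_trans)
  have "measure M B \<le> measure M C / 2 ^ Suc k"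
    using B(4) divide_right_mono[OF D(4), of 2] by simp
  with B D(2) show ?case by blast
qed

lemma (in finite_measure) nonzero_measure_imp_pos_level_set:
  fixes f :: "'a \<Rightarrow> real"
  assumes [measurable]: "f \<in> borel_measurable M"
    and "AE x in M. f x \<ge> 0" and "measure M {x \<in> space M. f x \<noteq> 0} > 0"
  shows "\<exists>e>0. measure M {x \<in> space M. e \<le> f x} > 0"
proof (rule ccontr)
  assume "\<not> ?thesis"
  then have "measure M {x \<in> space M. 1 / Suc k \<le> f x} = 0" for k
    using measure_nonneg[of M] by (metis not_less order_antisym of_nat_0_less_iff zero_less_Suc zero_less_divide_1_iff)
  then have "AE x in M. f x < 1 / Suc k" for k
    by (subst AE_iff_measurable[OF _ refl]) (auto simp: emeasure_eq_measure not_less)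
  then have "AE x in M. \<forall>k. f x < 1 / Suc k"
    by (simp add: AE_all_countable)
  with assms(2) have "AE x in M. f x = 0"
  proof eventually_elim
    case (elim x)
    show ?case
    proof (rule ccontr)
      assume "f x \<noteq> 0"
      with elim obtain k where "1 / Suc k < f x"
        by (metis nat_approx_posE order_le_neq_trans)
      with elim show False by (meson not_less_iff_gr_or_eq)
    qed
  qed
  then have "emeasure M {x \<in> space M. f x \<noteq> 0} = 0"
    by (intro emeasure_eq_0_AE) simp
  with assms(3) show False
    by (simp add: emeasure_eq_measure)
qed

lemma (in finite_measure) obtain_AE_pos_below_on_summable_sets:
  fixes eps :: "nat \<Rightarrow> real"
  assumes [measurable]: "\<And>n. D n \<in> sets M"
    and "summable (\<lambda>n. measure M (D n))" and eps: "\<And>n. eps n > 0"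
  obtains s where "s \<in> borel_measurable M" "AE x in M. s x > 0" "\<And>n x. x \<in> D n \<Longrightarrow> s x \<le> eps n"
proof -
  define s where "s x = (INF n. if x \<in> D n then eps n else 1)" for x
  have bdd: "bdd_below (range (\<lambda>n. if x \<in> D n then eps n else 1))" for x
    using eps by (intro bdd_belowI[of _ 0]) (auto intro: less_imp_le)
  have s_meas: "s \<in> borel_measurable M"
    unfolding s_def by measurable
  have s_le: "s x \<le> eps n" if "x \<in> D n" for n x
    unfolding s_def using cINF_lower[OF bdd, of n x] that by simp
  have "AE x in M. eventually (\<lambda>n. x \<in> space M - D n) sequentially"
    using assms by (intro borel_cantelli_AE1) (auto simp: less_top[symmetric])
  then have s_pos: "AE x in M. s x > 0"
  proof eventually_elim
    case (elim x)
    then obtain N where N: "\<And>n. n \<ge> N \<Longrightarrow> x \<notin> D n"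
      by (auto simp: eventually_sequentially)
    define c where "c = Min (insert 1 (eps ` {..<N}))"
    have "c > 0" unfolding c_def using eps by (subst Min_gr_iff) auto
    also have "c \<le> s x"
      unfolding s_def
    proof (rule cINF_greatest)
      fix n
      have "c \<le> 1" unfolding c_def by simp
      moreover have "c \<le> eps n" if "x \<in> D n"
      proof -
        have "n < N" using N[of n] that by (meson not_le)
        then show ?thesis unfolding c_def by (intro Min_le insertI2 imageI) simp_all
      qed
      ultimately show "c \<le> (if x \<in> D n then eps n else 1)" by simp
    qed simp
    finally show ?case .
  qed
  show thesis by (rule that[OF s_meas s_pos s_le])
qed

lemma (in finite_measure) atomless_set_obtain_summable_subsets:
  assumes "atomless_set M S" "\<And>n. C n \<in> sets M" "\<And>n. C n \<subseteq> S" "\<And>n. measure M (C n) > 0"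
  obtains D where "\<And>n. D n \<in> sets M" "\<And>n. D n \<subseteq> C n" "\<And>n. 0 < measure M (D n)"
    "summable (\<lambda>n. measure M (D n))"
proof -
  have "\<forall>n. \<exists>D. D \<in> sets M \<and> D \<subseteq> C n \<and> 0 < measure M D \<and> measure M D \<le> measure M (C n) / 2 ^ n"
    using atomless_set_small_subset[OF assms] by blast
  from choice[OF this] obtain D where D: "\<forall>n. D n \<in> sets M \<and> D n \<subseteq> C n \<and> 0 < measure M (D n) \<and>
      measure M (D n) \<le> measure M (C n) / 2 ^ n"
    by blast
  have "summable (\<lambda>n. measure M (D n))"
  proof (rule summable_comparison_test')
    show "summable (\<lambda>n. measure M (space M) * (1 / 2) ^ n)"
      by (intro summable_mult summable_geometric) simp
    fix n
    have "measure M (D n) \<le> measure M (C n) / 2 ^ n" using D by blast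
    also have "\<dots> \<le> measure M (space M) / 2 ^ n"
      by (intro divide_right_mono bounded_measure) simp
    finally show "norm (measure M (D n)) \<le> measure M (space M) * (1 / 2) ^ n"
      by (simp add: power_one_over)
  qed
  moreover have "D n \<in> sets M" "D n \<subseteq> C n" "0 < measure M (D n)" for n
    using D by blast+
  ultimately show thesis using that by blast
qed

theorem lemma5p1:
  fixes M :: "'a measure" and r :: "nat \<Rightarrow> 'a \<Rightarrow> real"
  assumes "prob_space M"
    and meas: "\<And>n. r n \<in> borel_measurable M"
    and nonneg: "\<And>n. AE x in M. r n x \<ge> 0"
    and nonzero: "\<And>n. measure M {x \<in> space M. r n x \<noteq> 0} > 0"
    and atomless: "atomless_set M {x \<in> space M. (SUP n. ereal (r n x)) > 0}"
  shows "\<exists>s. s \<in> borel_measurable M \<and> (AE x in M. s x > 0) \<and>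
             (\<forall>n. measure M {x \<in> space M. r n x \<ge> s x} > 0)"
proof -
  interpret prob_space M by (rule assms(1))
  note [measurable] = meas
  have "\<forall>n. \<exists>e>0. measure M {x \<in> space M. e \<le> r n x} > 0"
    using nonzero_measure_imp_pos_level_set[OF meas nonneg nonzero] by blast
  from choice[OF this] obtain eps
    where eps: "\<forall>n. eps n > 0 \<and> measure M {x \<in> space M. eps n \<le> r n x} > 0"
    by blast
  define C where "C n = {x \<in> space M. eps n \<le> r n x}" for n
  have eps_pos: "eps n > 0" and C_pos: "measure M (C n) > 0" for n
    using eps unfolding C_def by blast+
  have C_sets: "C n \<in> sets M" for n
    unfolding C_def by measurable
  have C_sub: "C n \<subseteq> {x \<in> space M. (SUP n. ereal (r n x)) > 0}" for n
  proof
    fix x assume x: "x \<in> C n"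
    then have "0 < r n x" using eps_pos[of n] unfolding C_def by auto
    then have "0 < ereal (r n x)" by simp
    also have "\<dots> \<le> (SUP n. ereal (r n x))" by (rule SUP_upper) simp
    finally have "0 < (SUP n. ereal (r n x))" .
    moreover have "x \<in> space M" using x unfolding C_def by blast
    ultimately show "x \<in> {x \<in> space M. (SUP n. ereal (r n x)) > 0}" by simp
  qed
  obtain D where D: "\<And>n. D n \<in> sets M" "\<And>n. D n \<subseteq> C n" "\<And>n. 0 < measure M (D n)"
    and summable: "summable (\<lambda>n. measure M (D n))"
    by (rule atomless_set_obtain_summable_subsets[where C = C, OF atomless C_sets C_sub C_pos])
      (rule that)
  obtain s where s: "s \<in> borel_measurable M" "AE x in M. s x > 0" "\<And>n x. x \<in> D n \<Longrightarrow> s x \<le> eps n"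
    by (rule obtain_AE_pos_below_on_summable_sets[where eps = eps, OF D(1) summable eps_pos])
      (rule that)
  have "D n \<subseteq> {x \<in> space M. s x \<le> r n x}" for n
  proof
    fix x assume "x \<in> D n"
    then have "x \<in> C n" "s x \<le> eps n" using D(2) s(3) by blast+
    then show "x \<in> {x \<in> space M. s x \<le> r n x}" unfolding C_def by auto
  qed
  then have D_le: "measure M (D n) \<le> measure M {x \<in> space M. s x \<le> r n x}" for n
    using s(1) by (intro finite_measure_mono) measurable
  have "0 < measure M {x \<in> space M. s x \<le> r n x}" for n
    using D(3)[of n] D_le[of n] by linarith
  with s(1,2) show ?thesis by blast
qed

end
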